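(* Fix $c>0$ and $b\in\mathbb C$ with $|b|<1$, and let $u(x)$ be the germ at $x=0$ with $u(0)=0$ defined by $u=x\bigl(1+\frac{cu^2}{1-bu}\bigr)$, equivalently the local inverse at $u=0$ of $X(u)=\frac{u(1-bu)}{1-bu+cu^2}$. Let $\rho_*$ be the radius of analyticity of this germ at $0$. Then $\rho_*=\min\{|x_*^+|,|x_*^-|\}$ where $x_*^\pm=\frac{1}{b\pm2\sqrt c}$. *)

theory Defs
  imports "HOL-Complex_Analysis.Complex_Analysis"
begin

definition is_u_germ :: "real \<Rightarrow> complex \<Rightarrow> (complex \<Rightarrow> complex) \<Rightarrow> bool" where
  "is_u_germ c b f \<longleftrightarrow> f 0 = 0 \<and>
     (\<forall>\<^sub>F x in nhds 0. f x = x * (1 + of_real c * (f x)^2 / (1 - b * f x)))"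

definition u_radius :: "real \<Rightarrow> complex \<Rightarrow> ereal" where
  "u_radius c b = Sup {ereal r | r. r > 0 \<and>
      (\<exists>f. f holomorphic_on ball 0 r \<and> is_u_germ c b f)}"

definition x_star_plus :: "real \<Rightarrow> complex \<Rightarrow> complex" where
  "x_star_plus c b = 1 / (b + 2 * of_real (sqrt c))"

definition x_star_minus :: "real \<Rightarrow> complex \<Rightarrow> complex" where
  "x_star_minus c b = 1 / (b - 2 * of_real (sqrt c))"

text \<open>min{|x+|,|x-|}, where a point x = 1/0 is read as infinity (so it is
  discarded from the minimum).\<close>
definition min_abs_xstar :: "real \<Rightarrow> complex \<Rightarrow> real" where
  "min_abs_xstar c b =
    (if b - 2 * of_real (sqrt c) = 0 then cmod (x_star_plus c b)
     else if b + 2 * of_real (sqrt c) = 0 then cmod (x_star_minus c b)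
     else min (cmod (x_star_plus c b)) (cmod (x_star_minus c b)))"

end

theory Submission
  imports Defs
begin

(* Clearing the denominator, the germ solves the quadratic (b + c x) u^2 - (1 + b x) u + x = 0,
   whose discriminant factors as (1 - (b + 2 sqrt c) x) (1 - (b - 2 sqrt c) x), with zeros x_*^+ and
   x_*^-. At a nonzero zero of the discriminant the root u is double while the x-derivative of the
   quadratic does not vanish, so implicit differentiation shows that no holomorphic solution can
   reach it; this bounds the radius by
   min {|x_*^+|, |x_*^-|}. Conversely, the root
   u = 2 x / (1 + b x + sqrt (1 - (b + 2 sqrt c) x) sqrt (1 - (b - 2 sqrt c) x)), with principal
   square roots, is holomorphic on that disc: there 1 + b x and both radicands have positive real
   part, hence so does the denominator. *)

definition u_quadratic :: "complex \<Rightarrow> complex \<Rightarrow> complex \<Rightarrow> complex \<Rightarrow> complex" where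
  "u_quadratic c b x u = (b + x * c) * u\<^sup>2 - (1 + x * b) * u + x"

definition u_discriminant :: "complex \<Rightarrow> complex \<Rightarrow> complex \<Rightarrow> complex" where
  "u_discriminant c b x = (1 + x * b)\<^sup>2 - 4 * x * (b + x * c)"

lemma u_discriminant_factor:
  "u_discriminant (s\<^sup>2) b x = (1 - (b + 2 * s) * x) * (1 - (b - 2 * s) * x)"
  unfolding u_discriminant_def by algebra

lemma u_equation_iff_u_quadratic:
  assumes "1 - b * u \<noteq> 0"
  shows "u = x * (1 + c * u\<^sup>2 / (1 - b * u)) \<longleftrightarrow> u_quadratic c b x u = 0"
proof -
  have "u = x * (1 + c * u\<^sup>2 / (1 - b * u)) \<longleftrightarrow> u * (1 - b * u) = x * (1 - b * u) + x * c * u\<^sup>2"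
    using assms by (simp add: field_simps)
  also have "\<dots> \<longleftrightarrow> u_quadratic c b x u = 0"
    unfolding u_quadratic_def by algebra
  finally show ?thesis .
qed

(* The two expressions are the partial derivatives of u_quadratic in u and in x. *)
lemma u_quadratic_double_root:
  assumes "x \<noteq> 0" "c \<noteq> 0" "u_quadratic c b x u = 0" "u_discriminant c b x = 0"
  shows "2 * (b + x * c) * u - (1 + x * b) = 0" and "c * u\<^sup>2 - b * u + 1 \<noteq> 0"
proof -
  have "(2 * (b + x * c) * u - (1 + x * b))\<^sup>2
      = 4 * (b + x * c) * u_quadratic c b x u + u_discriminant c b x"
    unfolding u_quadratic_def u_discriminant_def by algebra
  then show "2 * (b + x * c) * u - (1 + x * b) = 0"
    using assms(3,4) by simp
  show "c * u\<^sup>2 - b * u + 1 \<noteq> 0"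
  proof
    assume crit: "c * u\<^sup>2 - b * u + 1 = 0"
    have "u * (b * u - 1) = u_quadratic c b x u - x * (c * u\<^sup>2 - b * u + 1)"
      unfolding u_quadratic_def by algebra
    then have "u = 0 \<or> b * u = 1"
      using assms(3) crit by simp
    then show False
      using assms crit by (auto simp: u_quadratic_def)
  qed
qed

lemma eventually_one_minus_mult_ne_zero:
  assumes "isCont f 0" "f 0 = 0"
  shows "\<forall>\<^sub>F x in nhds 0. 1 - b * f x \<noteq> (0::complex)"
proof -
  have "(f \<longlongrightarrow> 0) (nhds 0)"
    using assms tendsto_at_iff_tendsto_nhds isCont_def by metis
  then have "((\<lambda>x. 1 - b * f x) \<longlongrightarrow> 1) (nhds 0)"
    by (auto intro!: tendsto_eq_intros)
  then show ?thesis
    by (rule tendsto_imp_eventually_ne) simp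
qed

lemma is_u_germ_iff_u_quadratic:
  assumes "isCont f 0"
  shows "is_u_germ c b f \<longleftrightarrow> f 0 = 0 \<and> (\<forall>\<^sub>F x in nhds 0. u_quadratic (of_real c) b x (f x) = 0)"
proof (cases "f 0 = 0")
  case True
  have "\<forall>\<^sub>F x in nhds 0. f x = x * (1 + of_real c * (f x)\<^sup>2 / (1 - b * f x))
      \<longleftrightarrow> u_quadratic (of_real c) b x (f x) = 0"
    using eventually_one_minus_mult_ne_zero[OF assms True]
    by eventually_elim (rule u_equation_iff_u_quadratic)
  then show ?thesis
    unfolding is_u_germ_def using True by (simp add: eventually_subst)
qed (simp add: is_u_germ_def)

lemma u_quadratic_holomorphic_germ:
  assumes hol: "f holomorphic_on S" and S: "open S" "connected S" "0 \<in> S"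
    and germ: "is_u_germ c b f" and x: "x \<in> S"
  shows "u_quadratic (of_real c) b x (f x) = 0"
proof -
  have "isCont f 0"
    using hol S by (meson holomorphic_on_imp_continuous_on continuous_on_eq_continuous_at)
  then have "\<forall>\<^sub>F z in nhds 0. u_quadratic (of_real c) b z (f z) = 0"
    using germ by (simp add: is_u_germ_iff_u_quadratic)
  then obtain B where B: "open B" "0 \<in> B" "\<forall>z\<in>B. u_quadratic (of_real c) b z (f z) = 0"
    unfolding eventually_nhds by blast
  show ?thesis
  proof (rule analytic_continuation_open[where f = "\<lambda>z. u_quadratic (of_real c) b z (f z)"
        and g = "\<lambda>_. 0" and s = "B \<inter> S" and s' = S])
    show "B \<inter> S \<noteq> {}"
      using B S by blast
  qed (use B S x hol in \<open>auto simp: u_quadratic_def intro!: holomorphic_intros\<close>)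
qed

lemma u_discriminant_nonzero_holomorphic_germ:
  assumes "c \<noteq> 0" and hol: "f holomorphic_on S" and S: "open S" "connected S" "0 \<in> S"
    and germ: "is_u_germ c b f" and x: "x \<in> S" "x \<noteq> 0"
  shows "u_discriminant (of_real c) b x \<noteq> 0"
proof
  assume disc: "u_discriminant (of_real c) b x = 0"
  define Q where "Q z = u_quadratic (of_real c) b z (f z)" for z
  have "(Q has_field_derivative (of_real c * (f x)\<^sup>2 - b * f x + 1)
      + (2 * (b + x * of_real c) * f x - (1 + x * b)) * deriv f x) (at x)"
    using holomorphic_derivI[OF hol S(1) x(1)] unfolding Q_def u_quadratic_def
    by (auto intro!: derivative_eq_intros simp: algebra_simps)
  moreover have "(Q has_field_derivative 0) (at x)"
    using u_quadratic_holomorphic_germ[OF hol S germ]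
    by (intro has_field_derivative_transform_within_open[OF DERIV_const S(1) x(1)]) (simp add: Q_def)
  ultimately have "(of_real c * (f x)\<^sup>2 - b * f x + 1)
      + (2 * (b + x * of_real c) * f x - (1 + x * b)) * deriv f x = 0"
    using DERIV_unique by blast
  moreover have "u_quadratic (of_real c) b x (f x) = 0"
    using u_quadratic_holomorphic_germ[OF hol S germ x(1)] .
  ultimately show False
    using u_quadratic_double_root[OF x(2) _ _ disc] \<open>c \<noteq> 0\<close> by simp
qed

lemma u_quadratic_rationalised_root:
  assumes "T \<noteq> 0" "(T - (1 + x * b))\<^sup>2 = u_discriminant c b x"
  shows "u_quadratic c b x (2 * x / T) = 0"
proof -
  have "T\<^sup>2 * u_quadratic c b x (2 * x / T) = x * ((T - (1 + x * b))\<^sup>2 - u_discriminant c b x)"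
    using assms(1) unfolding u_quadratic_def u_discriminant_def
    by (simp add: field_simps power2_eq_square)
  then show ?thesis
    using assms by simp
qed

lemma Re_one_minus_pos: "cmod z < 1 \<Longrightarrow> 0 < Re (1 - z)"
  using abs_Re_le_cmod[of z] by simp

lemma Re_csqrt_mult_csqrt_pos:
  assumes "0 < Re z" "0 < Re w"
  shows "0 < Re (csqrt z * csqrt w)"
proof -
  have sector: "\<bar>Im (csqrt v)\<bar> < Re (csqrt v)" if "0 < Re v" for v
  proof -
    have "Re v = (Re (csqrt v))\<^sup>2 - (Im (csqrt v))\<^sup>2"
      by (metis Re_power2 power2_csqrt)
    then have "\<bar>Im (csqrt v)\<bar>\<^sup>2 < (Re (csqrt v))\<^sup>2"
      using that unfolding power2_abs by linarith
    then show ?thesis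
      using Re_csqrt power2_less_imp_less by blast
  qed
  have "Im (csqrt z) * Im (csqrt w) \<le> \<bar>Im (csqrt z)\<bar> * \<bar>Im (csqrt w)\<bar>"
    by (simp add: abs_mult [symmetric])
  also have "\<dots> < Re (csqrt z) * Re (csqrt w)"
    using sector[OF assms(1)] sector[OF assms(2)]
    by (intro mult_strict_mono) (auto simp del: csqrt.sel intro: le_less_trans[OF abs_ge_zero])
  finally show ?thesis
    by simp
qed

(* The root (1 + b x - sqrt D) / (2 (b + s^2 x)) vanishing at 0, with rationalised numerator;
   s stands for sqrt c. *)
definition u_solution :: "complex \<Rightarrow> complex \<Rightarrow> complex \<Rightarrow> complex" where
  "u_solution s b x =
     2 * x / (1 + x * b + csqrt (1 - (b + 2 * s) * x) * csqrt (1 - (b - 2 * s) * x))"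

lemma Re_u_solution_denominator_pos:
  assumes "cmod ((b + 2 * s) * x) < 1" "cmod ((b - 2 * s) * x) < 1"
  shows "0 < Re (1 + x * b + csqrt (1 - (b + 2 * s) * x) * csqrt (1 - (b - 2 * s) * x))"
proof -
  have "(b + 2 * s) * x + (b - 2 * s) * x = 2 * (x * b)"
    by (simp add: algebra_simps)
  then have "2 * cmod (x * b) \<le> cmod ((b + 2 * s) * x) + cmod ((b - 2 * s) * x)"
    using norm_triangle_ineq[of "(b + 2 * s) * x" "(b - 2 * s) * x"] by (simp add: norm_mult)
  then have "0 < Re (1 - - (x * b))"
    using assms by (intro Re_one_minus_pos) simp
  moreover have "0 < Re (csqrt (1 - (b + 2 * s) * x) * csqrt (1 - (b - 2 * s) * x))"
    using assms by (intro Re_csqrt_mult_csqrt_pos Re_one_minus_pos)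
  ultimately show ?thesis
    by simp
qed

lemma u_solution_holomorphic:
  assumes "\<And>x. x \<in> S \<Longrightarrow> cmod ((b + 2 * s) * x) < 1 \<and> cmod ((b - 2 * s) * x) < 1"
  shows "u_solution s b holomorphic_on S"
  unfolding u_solution_def
proof (intro holomorphic_intros)
  fix x assume "x \<in> S"
  then have small: "cmod ((b + 2 * s) * x) < 1" "cmod ((b - 2 * s) * x) < 1"
    using assms by auto
  then show "1 - (b + 2 * s) * x \<notin> \<real>\<^sub>\<le>\<^sub>0" "1 - (b - 2 * s) * x \<notin> \<real>\<^sub>\<le>\<^sub>0"
    using Re_one_minus_pos by (force simp: complex_nonpos_Reals_iff)+
  show "1 + x * b + csqrt (1 - (b + 2 * s) * x) * csqrt (1 - (b - 2 * s) * x) \<noteq> 0"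
    using Re_u_solution_denominator_pos[OF small] by force
qed

lemma u_solution_root:
  assumes "cmod ((b + 2 * s) * x) < 1" "cmod ((b - 2 * s) * x) < 1"
  shows "u_quadratic (s\<^sup>2) b x (u_solution s b x) = 0"
  unfolding u_solution_def
proof (rule u_quadratic_rationalised_root)
  show "1 + x * b + csqrt (1 - (b + 2 * s) * x) * csqrt (1 - (b - 2 * s) * x) \<noteq> 0"
    using Re_u_solution_denominator_pos[OF assms] by force
  show "(1 + x * b + csqrt (1 - (b + 2 * s) * x) * csqrt (1 - (b - 2 * s) * x) - (1 + x * b))\<^sup>2
      = u_discriminant (s\<^sup>2) b x"
    by (simp add: u_discriminant_factor power_mult_distrib)
qed

lemma is_u_germ_u_solution:
  assumes "0 \<le> c"
  shows "is_u_germ c b (u_solution (of_real (sqrt c)) b)"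
proof -
  let ?s = "complex_of_real (sqrt c)"
  define U where "U = {x. cmod ((b + 2 * ?s) * x) < 1 \<and> cmod ((b - 2 * ?s) * x) < 1}"
  have U: "open U" "0 \<in> U"
    unfolding U_def by (auto intro!: open_Collect_conj open_Collect_less continuous_intros)
  have "u_solution ?s b holomorphic_on U"
    by (rule u_solution_holomorphic) (simp add: U_def)
  then have "isCont (u_solution ?s b) 0"
    using U continuous_on_eq_continuous_at holomorphic_on_imp_continuous_on by blast
  moreover have "\<forall>\<^sub>F x in nhds 0. u_quadratic (of_real c) b x (u_solution ?s b x) = 0"
    using eventually_nhds_in_open[OF U]
  proof eventually_elim
    case (elim x)
    then show ?case
      using u_solution_root[of b ?s x] assms unfolding U_def by (simp flip: of_real_power)
  qed
  moreover have "u_solution ?s b 0 = 0"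
    by (simp add: u_solution_def)
  ultimately show ?thesis
    by (simp add: is_u_germ_iff_u_quadratic)
qed

lemma min_abs_xstar_le:
  shows "b + 2 * of_real (sqrt c) \<noteq> 0 \<Longrightarrow> min_abs_xstar c b \<le> cmod (x_star_plus c b)"
    and "b - 2 * of_real (sqrt c) \<noteq> 0 \<Longrightarrow> min_abs_xstar c b \<le> cmod (x_star_minus c b)"
  unfolding min_abs_xstar_def by auto

lemma min_abs_xstar_cases:
  assumes "0 < c"
  shows "b + 2 * of_real (sqrt c) \<noteq> 0 \<and> min_abs_xstar c b = cmod (x_star_plus c b)
    \<or> b - 2 * of_real (sqrt c) \<noteq> 0 \<and> min_abs_xstar c b = cmod (x_star_minus c b)"
proof -
  have "b + 2 * of_real (sqrt c) \<noteq> b - 2 * of_real (sqrt c)"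
    using assms by simp
  then show ?thesis
    unfolding min_abs_xstar_def by (auto simp: min_def)
qed

lemma norm_mult_less_one_if_less_min_abs_xstar:
  assumes "cmod x < min_abs_xstar c b"
  shows "cmod ((b + 2 * of_real (sqrt c)) * x) < 1 \<and> cmod ((b - 2 * of_real (sqrt c)) * x) < 1"
proof -
  have "cmod (a * x) < 1" if "a = 0 \<or> min_abs_xstar c b \<le> cmod (1 / a)" for a
  proof (cases "a = 0")
    case False
    then have "cmod a * cmod x < cmod a * cmod (1 / a)"
      using that assms by (intro mult_strict_left_mono) auto
    then show ?thesis
      using False by (simp add: norm_mult norm_divide)
  qed simp
  then show ?thesis
    using min_abs_xstar_le[of b c] unfolding x_star_plus_def x_star_minus_def by blast
qed

lemma min_abs_xstar_attained:
  assumes "0 < c"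
  obtains x where "x \<noteq> 0" "cmod x = min_abs_xstar c b" "u_discriminant (of_real c) b x = 0"
proof -
  have disc: "u_discriminant (of_real c) b x
      = (1 - (b + 2 * of_real (sqrt c)) * x) * (1 - (b - 2 * of_real (sqrt c)) * x)" for x
    using assms u_discriminant_factor[of "of_real (sqrt c)"] by (simp flip: of_real_power)
  from min_abs_xstar_cases[OF assms, of b] show ?thesis
  proof
    assume "b + 2 * of_real (sqrt c) \<noteq> 0 \<and> min_abs_xstar c b = cmod (x_star_plus c b)"
    then show ?thesis
      using that[of "x_star_plus c b"] by (simp add: disc x_star_plus_def)
  next
    assume "b - 2 * of_real (sqrt c) \<noteq> 0 \<and> min_abs_xstar c b = cmod (x_star_minus c b)"
    then show ?thesis
      using that[of "x_star_minus c b"] by (simp add: disc x_star_minus_def)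
  qed
qed

lemma min_abs_xstar_pos: "0 < c \<Longrightarrow> 0 < min_abs_xstar c b"
  by (metis min_abs_xstar_attained zero_less_norm_iff)

lemma holomorphic_u_germ_radius_le:
  assumes "0 < c" "f holomorphic_on ball 0 r" "is_u_germ c b f"
  shows "r \<le> min_abs_xstar c b"
proof (rule ccontr)
  assume "\<not> r \<le> min_abs_xstar c b"
  moreover obtain x
    where x: "x \<noteq> 0" "cmod x = min_abs_xstar c b" "u_discriminant (of_real c) b x = 0"
    using min_abs_xstar_attained[OF assms(1)] .
  ultimately have "cmod x < r"
    by simp
  moreover from this have "0 < r"
    using norm_ge_zero[of x] by linarith
  ultimately have "x \<in> ball 0 r" "0 \<in> ball 0 r"
    by auto
  then show False
    using u_discriminant_nonzero_holomorphic_germ[OF _ assms(2) _ _ _ assms(3)] x assms(1) by auto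
qed

theorem proposition6p2:
  fixes c :: real and b :: complex
  assumes "c > 0" and "cmod b < 1"
  shows "u_radius c b = ereal (min_abs_xstar c b)"
proof -
  let ?radii = "{ereal r | r. r > 0 \<and> (\<exists>f. f holomorphic_on ball 0 r \<and> is_u_germ c b f)}"
  have "u_solution (of_real (sqrt c)) b holomorphic_on ball 0 (min_abs_xstar c b)"
    by (intro u_solution_holomorphic norm_mult_less_one_if_less_min_abs_xstar) simp
  then have attained: "ereal (min_abs_xstar c b) \<in> ?radii"
    using assms(1) min_abs_xstar_pos is_u_germ_u_solution by fastforce
  have bound: "e \<le> ereal (min_abs_xstar c b)" if e: "e \<in> ?radii" for e
  proof -
    obtain r f where "e = ereal r" "f holomorphic_on ball 0 r" "is_u_germ c b f"
      using e by blast
    then show ?thesis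
      using holomorphic_u_germ_radius_le[OF assms(1)] by simp
  qed
  show ?thesis
    unfolding u_radius_def by (rule antisym[OF Sup_least[OF bound] Sup_upper[OF attained]])
qed

end
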